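(* Let $n\ge 2$ be an integer such that $n+1$ is an odd prime. If $[\delta_0,\dots,\delta_n]\in\{-1,1\}^{n+1}$ satisfies $\sum_{j=0}^n\delta_j\binom{n}{j}=0$, then either $\delta_j=(-1)^j$ for all $j$ or $\delta_j=-(-1)^j$ for all $j$. Equivalently, $\hat J_n=0$.
   Context: For even $n$, $\hat J_n$ is the number of vectors $(\epsilon_0,\dots,\epsilon_{n/2-1})\in\{-1,0,1\}^{n/2}$ with $\sum_{i=0}^{n/2-1}\epsilon_i\binom{n}{i}=(-1)^{n/2+1}\frac12\binom{n}{n/2}$, excluding the alternating vector $\epsilon_i=(-1)^i$. *)

theory Defs
  imports "HOL-Computational_Algebra.Primes"
begin

end

theory Submission
  imports Defs
begin

text \<open>Modulo the prime \<open>p = n + 1\<close> every binomial coefficient \<open>n choose j\<close> is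
  congruent to \<open>(-1)^j\<close>. Hence \<open>\<epsilon>\<^sub>j = \<delta>\<^sub>j (-1)^j\<close> are \<open>p\<close> signs whose sum is
  divisible by \<open>p\<close>. That sum lies in \<open>[-p, p]\<close> and has the parity of the odd
  number \<open>p\<close>, so it is \<open>\<plusminus>p\<close>, which forces all \<open>\<epsilon>\<^sub>j\<close> to be equal.\<close>

lemma prime_Suc_dvd_choose_minus_sign:
  fixes n :: nat
  assumes "prime (Suc n)" "j \<le> n"
  shows "int (Suc n) dvd int (n choose j) - (-1) ^ j"
  using assms(2)
proof (induction j)
  case 0
  then show ?case by simp
next
  case (Suc j)
  have "Suc n dvd Suc n choose Suc j"
    by (rule dvd_choose_prime) (use Suc.prems assms(1) in auto)
  then have "int (Suc n) dvd int (n choose j) + int (n choose Suc j)"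
    by (metis binomial_Suc_Suc int_dvd_int_iff of_nat_add)
  moreover have "int (Suc n) dvd int (n choose j) - (-1) ^ j"
    using Suc by simp
  ultimately have "int (Suc n) dvd
      (int (n choose j) + int (n choose Suc j)) - (int (n choose j) - (-1) ^ j)"
    by (rule dvd_diff)
  then show ?case by simp
qed

lemma sum_signs_eq_card_iff:
  fixes e :: "'a \<Rightarrow> int"
  assumes "finite A" "\<forall>x\<in>A. e x \<in> {-1, 1}"
  shows "sum e A = int (card A) \<longleftrightarrow> (\<forall>x\<in>A. e x = 1)"
proof -
  have "sum e A = int (card A) \<longleftrightarrow> (\<Sum>x\<in>A. 1 - e x) = 0"
    by (auto simp: sum_subtractf)
  also have "\<dots> \<longleftrightarrow> (\<forall>x\<in>A. e x = 1)"
    using assms by (subst sum_nonneg_eq_0_iff) auto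
  finally show ?thesis .
qed

lemma signs_constant_if_card_dvd_sum:
  fixes e :: "'a \<Rightarrow> int"
  assumes "finite A" "\<forall>x\<in>A. e x \<in> {-1, 1}"
    and "odd (card A)" "int (card A) dvd sum e A"
  shows "(\<forall>x\<in>A. e x = 1) \<or> (\<forall>x\<in>A. e x = -1)"
proof -
  define c where "c = int (card A)"
  have shifted: "sum e A + c = (\<Sum>x\<in>A. e x + 1)"
    by (simp add: c_def sum.distrib)
  have "0 \<le> (\<Sum>x\<in>A. e x + 1)"
    using assms(2) by (auto intro!: sum_nonneg)
  moreover have "(\<Sum>x\<in>A. e x + 1) \<le> (\<Sum>x\<in>A. 2)"
    using assms(2) by (intro sum_mono) auto
  ultimately have bounds: "- c \<le> sum e A" "sum e A \<le> c"
    using shifted by (simp_all add: c_def)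
  have "even (\<Sum>x\<in>A. e x + 1)"
    using assms(2) by (auto intro!: dvd_sum)
  then have "even (sum e A + c)"
    using shifted by simp
  then have "odd (sum e A)"
    using assms(3) by (simp add: c_def)
  obtain k where k: "sum e A = c * k"
    using assms(4) c_def by blast
  have "c > 0"
    using assms(3) by (auto simp: c_def intro!: Nat.gr0I)
  then have "-1 \<le> k" "k \<le> 1"
    using bounds k mult_le_cancel_left_pos[of c] by (metis mult_minus1_right mult_1_right)+
  then have "k \<in> {-1, 0, 1}"
    by auto
  with \<open>odd (sum e A)\<close> k have "sum e A = c \<or> - sum e A = c"
    by auto
  moreover have "- sum e A = c \<longleftrightarrow> (\<forall>x\<in>A. - e x = 1)"
    using sum_signs_eq_card_iff[of A "\<lambda>x. - e x"] assms(1,2) by (auto simp: c_def sum_negf)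
  ultimately show ?thesis
    using sum_signs_eq_card_iff[OF assms(1,2)] by (auto simp: c_def)
qed

theorem mainTheorem4:
  fixes n :: nat and \<delta> :: "nat \<Rightarrow> int"
  assumes "n \<ge> 2"
    and "prime (n + 1)" and "odd (n + 1)"
    and "\<forall>j\<le>n. \<delta> j \<in> {-1, 1}"
    and "(\<Sum>j=0..n. \<delta> j * int (n choose j)) = 0"
  shows "(\<forall>j\<le>n. \<delta> j = (-1) ^ j) \<or> (\<forall>j\<le>n. \<delta> j = - ((-1) ^ j))"
proof -
  define \<epsilon> where "\<epsilon> j = \<delta> j * (-1) ^ j" for j
  have \<epsilon>_sign: "\<forall>j\<in>{0..n}. \<epsilon> j \<in> {-1, 1}"
    using assms(4) by (auto simp: \<epsilon>_def minus_one_power_iff)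
  have "int (n + 1) dvd (\<Sum>j=0..n. \<delta> j * int (n choose j) - \<epsilon> j)"
  proof (rule dvd_sum)
    fix j assume "j \<in> {0..n}"
    then have "int (n + 1) dvd \<delta> j * (int (n choose j) - (-1) ^ j)"
      using prime_Suc_dvd_choose_minus_sign assms(2) by simp
    then show "int (n + 1) dvd \<delta> j * int (n choose j) - \<epsilon> j"
      by (simp add: \<epsilon>_def algebra_simps)
  qed
  then have "int (card {0..n}) dvd sum \<epsilon> {0..n}"
    using assms(5) by (simp add: sum_subtractf)
  then have "(\<forall>j\<in>{0..n}. \<epsilon> j = 1) \<or> (\<forall>j\<in>{0..n}. \<epsilon> j = -1)"
    using signs_constant_if_card_dvd_sum[OF _ \<epsilon>_sign] assms(3) by simp
  moreover have "\<delta> j = \<epsilon> j * (-1) ^ j" for j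
    by (simp add: \<epsilon>_def mult.assoc flip: power_add)
  ultimately show ?thesis
    by auto
qed

end
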